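(* Fix $c\neq0$ and $m\in[0,1)$, and let $k(m,V)$ be the constant to which the cnoidal profile $p_{m,V}$ is Virasoro-conjugate (defined for $V\notin(-\frac{m+1}{3},\frac{2m-1}{3})$). Then, as $V\to+\infty$ and as $V\to-\infty$, $$\frac{6\pi^2 k(m,V)}{c}=K(m)^2V-2K(m)\,\zeta(K(m))+O(1/|V|).$$
   Context: $K(m)=\int_0^{\pi/2}(1-m\sin^2\theta)^{-1/2}d\theta$; $\zeta$ is the Weierstrass zeta function with half-periods $K(m)$ and $iK(1-m)$ (i.e. $\zeta'=-\wp$, $\zeta$ odd, $\zeta(z)-1/z\to0$ at $0$, with $\wp$ the Weierstrass elliptic function of that lattice). The cnoidal profile is $p_{m,V}(x)=\frac{cK(m)^2}{3\pi^2}\big[\frac V2-\frac{m+1}3+m\,\mathrm{sn}^2(\frac{K(m)}{\pi}x|m)\big]$ with $\mathrm{sn}$ the Jacobi elliptic sine. A $2\pi$-periodic profile $p$ is Virasoro-conjugate to a constant $k$ if $p=f\cdot k$ for some smooth $f:\mathbb{R}\to\mathbb{R}$ with $f'>0$, $f(x+2\pi)=f(x)+2\pi$, where $(f\cdot q)(f(x))=f'(x)^{-2}[q(x)+\frac c{12}\mathsf{S}[f](x)]$ and $\mathsf{S}[f]=\frac{f'''}{f'}-\frac32(\frac{f''}{f'})^2$. Equivalently, $k(m,V)=\frac{c}{6\pi^2}[K(m)\zeta(a)-\zeta(K(m))a]^2$ with $\wp(a)=V$. *)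

theory Defs
  imports "HOL-Analysis.Analysis"
begin

definition ellK :: "real \<Rightarrow> real" where
  "ellK m = integral {0..pi/2} (\<lambda>\<theta>. 1 / sqrt (1 - m * (sin \<theta>)\<^sup>2))"

text \<open>For m = 0 the
  imaginary half-period K(1) is infinite, and the lattice degenerates to the
  one-dimensional lattice 2 K(0) Z (the limit of the Weierstrass functions as
  the imaginary period tends to infinity).\<close>
definition ell_lattice :: "real \<Rightarrow> complex set" where
  "ell_lattice m =
     (if m = 0 then {of_int a * 2 * complex_of_real (ellK m) | a. True}
      else {of_int a * 2 * complex_of_real (ellK m)
              + of_int b * 2 * \<i> * complex_of_real (ellK (1 - m)) | a b. True})"

definition wp :: "real \<Rightarrow> complex \<Rightarrow> complex" where
  "wp m z = 1 / z\<^sup>2 + (\<Sum>\<^sub>\<infinity>\<omega>\<in>ell_lattice m - {0}. 1 / (z - \<omega>)\<^sup>2 - 1 / \<omega>\<^sup>2)"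

definition wzeta :: "real \<Rightarrow> complex \<Rightarrow> complex" where
  "wzeta m z = 1 / z + (\<Sum>\<^sub>\<infinity>\<omega>\<in>ell_lattice m - {0}. 1 / (z - \<omega>) + 1 / \<omega> + z / \<omega>\<^sup>2)"

text \<open>The branch of the parameter a with wp(a) = V: a lies on the boundary of the
  rectangle with corners 0, K, K + i K', i K' (excluding 0 and the top edge,
  which corresponds to the excluded interval of V).  On this set wp is real and
  injective.  For m = 0 the imaginary half-period is infinite.\<close>
definition im_range :: "real \<Rightarrow> real set" where
  "im_range m = {t. 0 \<le> t \<and> (m = 0 \<or> t \<le> ellK (1 - m))}"

definition a_branch :: "real \<Rightarrow> complex set" where
  "a_branch m =
     {complex_of_real t | t. 0 < t \<and> t \<le> ellK m}
   \<union> {complex_of_real (ellK m) + \<i> * complex_of_real t | t. t \<in> im_range m}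
   \<union> {\<i> * complex_of_real t | t. t \<in> im_range m \<and> 0 < t}"

definition kconst :: "real \<Rightarrow> real \<Rightarrow> real \<Rightarrow> complex" where
  "kconst c m V =
     (let a = (THE a. a \<in> a_branch m \<and> wp m a = complex_of_real V);
          K = complex_of_real (ellK m)
      in complex_of_real (c / (6 * pi\<^sup>2)) * (K * wzeta m a - wzeta m K * a)\<^sup>2)"

end

theory Submission
  imports Defs
begin

(* Write wp = 1/z^2 + h and zeta = 1/z + g, where h = wp_reg and g = zeta_reg are the lattice sums
   without their singular terms.  Pairing each lattice point w with -w gives h(z) = O(|z|^2),
   g(z) = O(|z|^3) and a Lipschitz bound for h near 0, and the symmetry under conjugation makes h
   real on the real and on the imaginary axis.  So near 0, wp(t) and -wp(i t) are Lipschitz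
   perturbations of 1/t^2.  Since h stays bounded on the rest of the branch, for |V| large the
   equation wp(a) = V has exactly one solution a on the branch, on the real axis if V > 0 and on
   the imaginary axis if V < 0, and |a|^2 <= 2/|V|.  Finally
   (K zeta(a) - zeta(K) a)^2 - (K^2 wp(a) - 2 K zeta(K)) = O(|a|^2) = O(1/|V|). *)

definition wp_summand :: "complex \<Rightarrow> complex \<Rightarrow> complex" where
  "wp_summand z w = 1 / (z - w)\<^sup>2 - 1 / w\<^sup>2"

definition zeta_summand :: "complex \<Rightarrow> complex \<Rightarrow> complex" where
  "zeta_summand z w = 1 / (z - w) + 1 / w + z / w\<^sup>2"

lemma wp_summand_eq:
  assumes "w \<noteq> 0" "z \<noteq> w"
  shows "wp_summand z w = z * (2 * w - z) / (w\<^sup>2 * (z - w)\<^sup>2)"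
proof -
  have "z - w \<noteq> 0"
    using assms by simp
  with assms(1) show ?thesis
    by (simp add: wp_summand_def divide_simps) (simp add: algebra_simps power2_eq_square)
qed

lemma zeta_summand_eq:
  assumes "w \<noteq> 0" "z \<noteq> w"
  shows "zeta_summand z w = z\<^sup>2 / (w\<^sup>2 * (z - w))"
proof -
  have "z - w \<noteq> 0"
    using assms by simp
  with assms(1) show ?thesis
    by (simp add: zeta_summand_def divide_simps) (simp add: algebra_simps power2_eq_square)
qed

lemma wp_summand_pair_eq:
  assumes "w \<noteq> 0" "z \<noteq> w" "z \<noteq> - w"
  shows "wp_summand z w + wp_summand z (- w)
           = (6 * z\<^sup>2 * w\<^sup>2 - 2 * z ^ 4) / ((z - w)\<^sup>2 * (z + w)\<^sup>2 * w\<^sup>2)"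
proof -
  have "z - w \<noteq> 0" "z + w \<noteq> 0"
    using assms by (auto simp: add_eq_0_iff2)
  then show ?thesis
    using assms(1)
    by (simp add: wp_summand_def divide_simps) (simp add: algebra_simps power2_eq_square power4_eq_xxxx)
qed

lemma zeta_summand_pair_eq:
  assumes "w \<noteq> 0" "z \<noteq> w" "z \<noteq> - w"
  shows "zeta_summand z w + zeta_summand z (- w) = 2 * z ^ 3 / ((z - w) * (z + w) * w\<^sup>2)"
proof -
  have "z - w \<noteq> 0" "z + w \<noteq> 0"
    using assms by (auto simp: add_eq_0_iff2)
  then show ?thesis
    using assms(1)
    by (simp add: zeta_summand_def divide_simps) (simp add: algebra_simps power2_eq_square power3_eq_cube)
qed

lemma wp_summand_diff_eq:
  assumes "s \<noteq> w" "t \<noteq> w"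
  shows "wp_summand t w - wp_summand s w = (s - t) * (s + t - 2 * w) / ((t - w)\<^sup>2 * (s - w)\<^sup>2)"
proof -
  have "s - w \<noteq> 0" "t - w \<noteq> 0"
    using assms by auto
  then have "1 / (t - w)\<^sup>2 - 1 / (s - w)\<^sup>2 = (s - t) * (s + t - 2 * w) / ((t - w)\<^sup>2 * (s - w)\<^sup>2)"
    by (simp add: divide_simps) (simp add: algebra_simps power2_eq_square)
  then show ?thesis
    by (simp add: wp_summand_def)
qed

lemma half_norm_le_norm_diff:
  fixes z w :: complex
  assumes "2 * cmod z \<le> cmod w"
  shows "cmod w \<le> 2 * cmod (z - w)"
  using norm_triangle_ineq2[of w z] assms by (simp add: norm_minus_commute)

lemma norm_wp_summand_le:
  assumes "w \<noteq> 0" "cmod w \<le> 2 * cmod (z - w)"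
  shows "cmod (wp_summand z w) \<le> 4 * cmod z * (2 * cmod w + cmod z) / cmod w ^ 4"
proof -
  have "z \<noteq> w"
    using assms by auto
  have num: "cmod z * cmod (2 * w - z) \<le> cmod z * (2 * cmod w + cmod z)"
    using norm_triangle_ineq4[of "2 * w" z] by (intro mult_left_mono) (auto simp: norm_mult)
  have den: "cmod w ^ 2 * (cmod w / 2)\<^sup>2 \<le> cmod w ^ 2 * cmod (z - w) ^ 2"
    using assms(2) by (intro mult_left_mono power_mono) auto
  have "cmod (wp_summand z w) = cmod z * cmod (2 * w - z) / (cmod w ^ 2 * cmod (z - w) ^ 2)"
    using assms(1) \<open>z \<noteq> w\<close> by (simp add: wp_summand_eq norm_mult norm_divide norm_power)
  also have "\<dots> \<le> cmod z * (2 * cmod w + cmod z) / (cmod w ^ 2 * (cmod w / 2)\<^sup>2)"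
    using assms(1) by (intro frac_le num den) auto
  also have "\<dots> = 4 * cmod z * (2 * cmod w + cmod z) / cmod w ^ 4"
    by (simp add: field_simps power2_eq_square power4_eq_xxxx)
  finally show ?thesis .
qed

lemma norm_zeta_summand_le:
  assumes "w \<noteq> 0" "2 * cmod z \<le> cmod w"
  shows "cmod (zeta_summand z w) \<le> 2 * cmod z ^ 2 / cmod w ^ 3"
proof -
  have d: "cmod w \<le> 2 * cmod (z - w)"
    using half_norm_le_norm_diff[OF assms(2)] .
  then have "z \<noteq> w"
    using assms by auto
  have "cmod (zeta_summand z w) = cmod z ^ 2 / (cmod w ^ 2 * cmod (z - w))"
    using assms(1) \<open>z \<noteq> w\<close> by (simp add: zeta_summand_eq norm_mult norm_divide norm_power)
  also have "\<dots> \<le> cmod z ^ 2 / (cmod w ^ 2 * (cmod w / 2))"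
    using assms(1) d by (intro frac_le mult_left_mono) auto
  also have "\<dots> = 2 * cmod z ^ 2 / cmod w ^ 3"
    by (simp add: field_simps power2_eq_square power3_eq_cube)
  finally show ?thesis .
qed

lemma norm_wp_summand_pair_le:
  assumes "w \<noteq> 0" "2 * cmod z \<le> cmod w"
  shows "cmod (wp_summand z w + wp_summand z (- w)) \<le> 104 * cmod z ^ 2 / cmod w ^ 4"
proof -
  have d: "cmod w \<le> 2 * cmod (z - w)" "cmod w \<le> 2 * cmod (z + w)"
    using half_norm_le_norm_diff[OF assms(2)] half_norm_le_norm_diff[of z "- w"] assms(2) by auto
  then have "z \<noteq> w" "z \<noteq> - w"
    using assms by auto
  have z2: "cmod z ^ 2 \<le> cmod w ^ 2 / 4"
    using power_mono[of "2 * cmod z" "cmod w" 2] assms(2) by (simp add: power_mult_distrib)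
  have "cmod (6 * z\<^sup>2 * w\<^sup>2 - 2 * z ^ 4) \<le> 6 * cmod z ^ 2 * cmod w ^ 2 + 2 * (cmod z ^ 2 * cmod z ^ 2)"
    using norm_triangle_ineq4[of "6 * z\<^sup>2 * w\<^sup>2" "2 * z ^ 4"]
    by (simp add: norm_mult norm_power power4_eq_xxxx power2_eq_square)
  also have "\<dots> \<le> 6 * cmod z ^ 2 * cmod w ^ 2 + 2 * (cmod z ^ 2 * (cmod w ^ 2 / 4))"
    using z2 by (intro add_left_mono mult_left_mono) auto
  finally have num: "cmod (6 * z\<^sup>2 * w\<^sup>2 - 2 * z ^ 4) \<le> 13 / 2 * cmod z ^ 2 * cmod w ^ 2"
    by (simp add: mult_ac)
  have den: "(cmod w / 2)\<^sup>2 * (cmod w / 2)\<^sup>2 * cmod w ^ 2 \<le> cmod (z - w) ^ 2 * cmod (z + w) ^ 2 * cmod w ^ 2"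
    using d by (intro mult_right_mono mult_mono power_mono) auto
  have "cmod (wp_summand z w + wp_summand z (- w))
          = cmod (6 * z\<^sup>2 * w\<^sup>2 - 2 * z ^ 4) / (cmod (z - w) ^ 2 * cmod (z + w) ^ 2 * cmod w ^ 2)"
    using assms(1) \<open>z \<noteq> w\<close> \<open>z \<noteq> - w\<close> by (simp add: wp_summand_pair_eq norm_mult norm_divide norm_power)
  also have "\<dots> \<le> 13 / 2 * cmod z ^ 2 * cmod w ^ 2 / ((cmod w / 2)\<^sup>2 * (cmod w / 2)\<^sup>2 * cmod w ^ 2)"
    using assms(1) by (intro frac_le num den) auto
  also have "\<dots> = 104 * cmod z ^ 2 / cmod w ^ 4"
    using assms(1) by (simp add: field_simps power2_eq_square power4_eq_xxxx)
  finally show ?thesis .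
qed

lemma norm_zeta_summand_pair_le:
  assumes "w \<noteq> 0" "2 * cmod z \<le> cmod w"
  shows "cmod (zeta_summand z w + zeta_summand z (- w)) \<le> 8 * cmod z ^ 3 / cmod w ^ 4"
proof -
  have d: "cmod w \<le> 2 * cmod (z - w)" "cmod w \<le> 2 * cmod (z + w)"
    using half_norm_le_norm_diff[OF assms(2)] half_norm_le_norm_diff[of z "- w"] assms(2) by auto
  then have "z \<noteq> w" "z \<noteq> - w"
    using assms by auto
  have den: "cmod w / 2 * (cmod w / 2) * cmod w ^ 2 \<le> cmod (z - w) * cmod (z + w) * cmod w ^ 2"
    using d by (intro mult_right_mono mult_mono) auto
  have "cmod (zeta_summand z w + zeta_summand z (- w))
          = 2 * cmod z ^ 3 / (cmod (z - w) * cmod (z + w) * cmod w ^ 2)"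
    using assms(1) \<open>z \<noteq> w\<close> \<open>z \<noteq> - w\<close> by (simp add: zeta_summand_pair_eq norm_mult norm_divide norm_power)
  also have "\<dots> \<le> 2 * cmod z ^ 3 / (cmod w / 2 * (cmod w / 2) * cmod w ^ 2)"
    using assms(1) by (intro frac_le den) auto
  also have "\<dots> = 8 * cmod z ^ 3 / cmod w ^ 4"
    by (simp add: field_simps power2_eq_square power4_eq_xxxx)
  finally show ?thesis .
qed

lemma norm_wp_summand_diff_le:
  assumes "w \<noteq> 0" "2 * cmod s \<le> cmod w" "2 * cmod t \<le> cmod w"
  shows "cmod (wp_summand t w - wp_summand s w) \<le> 48 * cmod (t - s) / cmod w ^ 3"
proof -
  have d: "cmod w \<le> 2 * cmod (s - w)" "cmod w \<le> 2 * cmod (t - w)"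
    using half_norm_le_norm_diff assms(2,3) by auto
  then have "s \<noteq> w" "t \<noteq> w"
    using assms by auto
  have "cmod (s + t - 2 * w) \<le> cmod s + cmod t + cmod (2 * w)"
    by (metis norm_triangle_ineq norm_triangle_ineq4 add_right_mono order_trans)
  then have num: "cmod (t - s) * cmod (s + t - 2 * w) \<le> cmod (t - s) * (3 * cmod w)"
    using assms(2,3) by (intro mult_left_mono) (auto simp: norm_mult)
  have den: "(cmod w / 2)\<^sup>2 * (cmod w / 2)\<^sup>2 \<le> cmod (t - w) ^ 2 * cmod (s - w) ^ 2"
    using d by (intro mult_mono power_mono) auto
  have "cmod (wp_summand t w - wp_summand s w)
          = cmod (t - s) * cmod (s + t - 2 * w) / (cmod (t - w) ^ 2 * cmod (s - w) ^ 2)"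
    using \<open>s \<noteq> w\<close> \<open>t \<noteq> w\<close>
    by (simp add: wp_summand_diff_eq norm_mult norm_divide norm_power norm_minus_commute)
  also have "\<dots> \<le> cmod (t - s) * (3 * cmod w) / ((cmod w / 2)\<^sup>2 * (cmod w / 2)\<^sup>2)"
    using assms(1) by (intro frac_le num den) auto
  also have "\<dots> = 48 * cmod (t - s) / cmod w ^ 3"
    using assms(1) by (simp add: field_simps power2_eq_square power3_eq_cube)
  finally show ?thesis .
qed

section \<open>Lipschitz perturbations of the inverse square\<close>

lemma inverse_square_diff_ge:
  fixes s t r :: real
  assumes "0 < s" "s \<le> r" "0 < t" "t \<le> r"
  shows "2 * \<bar>t - s\<bar> \<le> r ^ 3 * \<bar>1 / s\<^sup>2 - 1 / t\<^sup>2\<bar>"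
proof -
  define P where "P = 1 / (s * t\<^sup>2) + 1 / (s\<^sup>2 * t)"
  have "s * t\<^sup>2 \<le> r * r\<^sup>2"
    using assms by (intro mult_mono power_mono) auto
  moreover have "s\<^sup>2 * t \<le> r\<^sup>2 * r"
    using assms by (intro mult_mono power_mono) auto
  ultimately have "1 \<le> r ^ 3 / (s * t\<^sup>2)" "1 \<le> r ^ 3 / (s\<^sup>2 * t)"
    using assms by (simp_all add: le_divide_eq power3_eq_cube power2_eq_square mult_ac)
  then have "2 \<le> r ^ 3 * P"
    unfolding P_def by (simp add: distrib_left)
  have "1 / s\<^sup>2 - 1 / t\<^sup>2 = (t - s) * P"
    using assms unfolding P_def by (simp add: divide_simps power2_eq_square) (simp add: algebra_simps)
  then have "r ^ 3 * \<bar>1 / s\<^sup>2 - 1 / t\<^sup>2\<bar> = r ^ 3 * P * \<bar>t - s\<bar>"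
    using assms unfolding P_def by (simp add: abs_mult)
  moreover have "2 * \<bar>t - s\<bar> \<le> r ^ 3 * P * \<bar>t - s\<bar>"
    using \<open>2 \<le> r ^ 3 * P\<close> by (intro mult_right_mono) auto
  ultimately show ?thesis
    by linarith
qed

lemma inj_on_inverse_square_plus_lipschitz:
  fixes e :: "real \<Rightarrow> real"
  assumes "0 < r" "\<Lambda> * r ^ 3 < 2" and lip: "\<Lambda>-lipschitz_on {0<..r} e"
  shows "inj_on (\<lambda>t. 1 / t\<^sup>2 + e t) {0<..r}"
proof (rule inj_onI, rule ccontr)
  fix s t assume s: "s \<in> {0<..r}" and t: "t \<in> {0<..r}" and "s \<noteq> t"
    and eq: "1 / s\<^sup>2 + e s = 1 / t\<^sup>2 + e t"
  have "1 / s\<^sup>2 - 1 / t\<^sup>2 = e t - e s"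
    using eq by linarith
  then have "2 * \<bar>t - s\<bar> \<le> r ^ 3 * \<bar>e t - e s\<bar>"
    using inverse_square_diff_ge[of s r t] s t by simp
  also have "\<dots> \<le> r ^ 3 * (\<Lambda> * \<bar>t - s\<bar>)"
    using lipschitz_onD[OF lip t s] \<open>0 < r\<close> by (intro mult_left_mono) (auto simp: dist_real_def)
  finally have "2 * \<bar>t - s\<bar> \<le> (\<Lambda> * r ^ 3) * \<bar>t - s\<bar>"
    by (simp add: mult_ac)
  then show False
    using \<open>s \<noteq> t\<close> \<open>\<Lambda> * r ^ 3 < 2\<close> by (simp add: mult_le_cancel_right)
qed

lemma ex_inverse_square_plus_eq:
  fixes e :: "real \<Rightarrow> real"
  assumes "0 < r" and bound: "\<And>t. t \<in> {0<..r} \<Longrightarrow> \<bar>e t\<bar> \<le> H"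
    and cont: "continuous_on {0<..r} e" and V: "1 / r\<^sup>2 + H \<le> V"
  shows "\<exists>t\<in>{0<..r}. 1 / t\<^sup>2 + e t = V"
proof -
  have "0 \<le> H"
    using bound[of r] \<open>0 < r\<close> by fastforce
  have "1 / r\<^sup>2 \<le> V + H" "0 < 1 / r\<^sup>2"
    using \<open>0 < r\<close> V \<open>0 \<le> H\<close> by simp_all
  then have "0 < V + H"
    by linarith
  define \<epsilon> where "\<epsilon> = 1 / sqrt (V + H)"
  have "0 < \<epsilon>" and eps_sq: "1 / \<epsilon>\<^sup>2 = V + H" and "1 / r \<le> sqrt (V + H)"
    using \<open>0 < V + H\<close> \<open>1 / r\<^sup>2 \<le> V + H\<close> by (auto simp: \<epsilon>_def power_divide intro!: real_le_rsqrt)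
  then have "\<epsilon> \<le> r"
    using \<open>0 < r\<close> by (simp add: \<epsilon>_def divide_le_eq mult.commute)
  have "1 / r\<^sup>2 + e r \<le> V"
    using bound[of r] \<open>0 < r\<close> V by auto
  moreover have "V \<le> 1 / \<epsilon>\<^sup>2 + e \<epsilon>"
    using bound[of \<epsilon>] \<open>0 < \<epsilon>\<close> \<open>\<epsilon> \<le> r\<close> eps_sq by auto
  moreover have "continuous_on {\<epsilon>..r} (\<lambda>t. 1 / t\<^sup>2 + e t)"
    using \<open>0 < \<epsilon>\<close> by (intro continuous_intros continuous_on_subset[OF cont]) auto
  ultimately obtain t where "\<epsilon> \<le> t" "t \<le> r" "1 / t\<^sup>2 + e t = V"
    using IVT2'[of "\<lambda>t. 1 / t\<^sup>2 + e t" r V \<epsilon>] \<open>\<epsilon> \<le> r\<close> by blast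
  then show ?thesis
    using \<open>0 < \<epsilon>\<close> by auto
qed

section \<open>Weierstrass functions of a symmetric discrete set\<close>

lemma majorant_summable_on:
  fixes f :: "'a \<Rightarrow> 'b::banach" and g :: "'a \<Rightarrow> real"
  assumes g: "g summable_on A" and le: "\<And>x. x \<in> A \<Longrightarrow> norm (f x) \<le> C * g x"
  shows majorant_summable: "f summable_on A"
    and norm_infsum_le_majorant: "norm (\<Sum>\<^sub>\<infinity>x\<in>A. f x) \<le> C * (\<Sum>\<^sub>\<infinity>x\<in>A. g x)"
proof -
  have Cg: "(\<lambda>x. C * g x) summable_on A"
    using g by (rule summable_on_cmult_right)
  then have "(\<lambda>x. norm (f x)) summable_on A"
    by (rule summable_on_comparison_test) (use le in auto)
  then show f: "f summable_on A"
    by (rule abs_summable_summable)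
  have "norm (\<Sum>\<^sub>\<infinity>x\<in>A. f x) \<le> (\<Sum>\<^sub>\<infinity>x\<in>A. C * g x)"
    using le by (intro norm_infsum_le[OF has_sum_infsum[OF f] has_sum_infsum[OF Cg]])
  also have "\<dots> = C * (\<Sum>\<^sub>\<infinity>x\<in>A. g x)"
    by (rule infsum_cmult_right')
  finally show "norm (\<Sum>\<^sub>\<infinity>x\<in>A. f x) \<le> C * (\<Sum>\<^sub>\<infinity>x\<in>A. g x)" .
qed

lemma zeta_expansion_eq:
  fixes a g h \<kappa> \<eta> :: complex
  assumes "a \<noteq> 0"
  shows "(\<kappa> * (1 / a + g) - \<eta> * a)\<^sup>2 - (\<kappa>\<^sup>2 * (1 / a\<^sup>2 + h) - 2 * \<kappa> * \<eta>)
           = 2 * \<kappa>\<^sup>2 * g / a + (\<kappa> * g - \<eta> * a)\<^sup>2 - \<kappa>\<^sup>2 * h"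
  using assms by (simp add: field_simps power2_eq_square)

locale weierstrass_lattice =
  fixes L :: "complex set" and \<rho> :: real
  assumes uminus_mem: "w \<in> L \<Longrightarrow> - w \<in> L"
    and cnj_mem: "w \<in> L \<Longrightarrow> cnj w \<in> L"
    and \<rho>_pos: "0 < \<rho>"
    and \<rho>_le_norm: "w \<in> L \<Longrightarrow> \<rho> \<le> cmod w"
    and summable_inverse_cube: "(\<lambda>w. 1 / cmod w ^ 3) summable_on L"
begin

definition inverse_cube_sum :: real where
  "inverse_cube_sum = (\<Sum>\<^sub>\<infinity>w\<in>L. 1 / cmod w ^ 3)"

definition wp_reg :: "complex \<Rightarrow> complex" where
  "wp_reg z = (\<Sum>\<^sub>\<infinity>w\<in>L. wp_summand z w)"

definition zeta_reg :: "complex \<Rightarrow> complex" where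
  "zeta_reg z = (\<Sum>\<^sub>\<infinity>w\<in>L. zeta_summand z w)"

definition wp_lat :: "complex \<Rightarrow> complex" where
  "wp_lat z = 1 / z\<^sup>2 + wp_reg z"

definition zeta_lat :: "complex \<Rightarrow> complex" where
  "zeta_lat z = 1 / z + zeta_reg z"

lemma nonzero_mem: "w \<in> L \<Longrightarrow> w \<noteq> 0"
  using \<rho>_le_norm \<rho>_pos by fastforce

lemma inverse_cube_sum_nonneg: "0 \<le> inverse_cube_sum"
  unfolding inverse_cube_sum_def by (rule infsum_nonneg) auto

lemma small_le_norm_mem: "2 * cmod z \<le> \<rho> \<Longrightarrow> w \<in> L \<Longrightarrow> 2 * cmod z \<le> cmod w"
  using \<rho>_le_norm by fastforce

lemma bij_betw_uminus: "bij_betw uminus L L"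
  by (rule bij_betwI[where g = uminus]) (simp_all add: Pi_iff uminus_mem)

lemma infsum_reflect: "(\<Sum>\<^sub>\<infinity>w\<in>L. f (- w)) = (\<Sum>\<^sub>\<infinity>w\<in>L. f w)"
  using infsum_reindex_bij_betw[OF bij_betw_uminus, of f] by simp

lemma summable_on_reflect: "f summable_on L \<Longrightarrow> (\<lambda>w. f (- w)) summable_on L"
  using summable_on_reindex_bij_betw[OF bij_betw_uminus, of f] by simp

lemma majorant_inverse_cube:
  assumes "\<And>w. w \<in> L \<Longrightarrow> cmod (f w) \<le> C / cmod w ^ 3"
  shows "f summable_on L" and "cmod (\<Sum>\<^sub>\<infinity>w\<in>L. f w) \<le> C * inverse_cube_sum"
  using majorant_summable_on[OF summable_inverse_cube, of f C] assms
  by (simp_all add: inverse_cube_sum_def)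

text \<open>Pairing w with -w cancels the terms of odd order in z.\<close>

lemma norm_infsum_le_pairs:
  assumes f: "f summable_on L" and pair: "\<And>w. w \<in> L \<Longrightarrow> cmod (f w + f (- w)) \<le> C / cmod w ^ 4"
  shows "cmod (\<Sum>\<^sub>\<infinity>w\<in>L. f w) \<le> C / (2 * \<rho>) * inverse_cube_sum"
proof -
  have "2 * (\<Sum>\<^sub>\<infinity>w\<in>L. f w) = (\<Sum>\<^sub>\<infinity>w\<in>L. f w) + (\<Sum>\<^sub>\<infinity>w\<in>L. f (- w))"
    by (simp add: infsum_reflect)
  also have "\<dots> = (\<Sum>\<^sub>\<infinity>w\<in>L. f w + f (- w))"
    using f summable_on_reflect[OF f] by (simp add: infsum_add)
  finally have "2 * cmod (\<Sum>\<^sub>\<infinity>w\<in>L. f w) = cmod (\<Sum>\<^sub>\<infinity>w\<in>L. f w + f (- w))"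
    by (metis norm_mult norm_numeral)
  also have "\<dots> \<le> C / \<rho> * inverse_cube_sum"
  proof (rule majorant_inverse_cube(2))
    fix w assume w: "w \<in> L"
    have w0: "0 < cmod w" and w\<rho>: "\<rho> \<le> cmod w"
      using w nonzero_mem \<rho>_le_norm by auto
    have "0 \<le> C / cmod w ^ 4"
      using pair[OF w] norm_ge_zero order_trans by blast
    then have "0 \<le> C"
      using w0 by (simp add: zero_le_divide_iff)
    have "C / cmod w ^ 4 = C / cmod w / cmod w ^ 3"
      by (simp add: power_add[of _ 1 3, simplified])
    also have "\<dots> \<le> C / \<rho> / cmod w ^ 3"
      by (rule divide_right_mono[OF divide_left_mono[OF w\<rho> \<open>0 \<le> C\<close>]]) (use w0 \<rho>_pos in auto)
    finally have "C / cmod w ^ 4 \<le> C / \<rho> / cmod w ^ 3" .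
    then show "cmod (f w + f (- w)) \<le> C / \<rho> / cmod w ^ 3"
      using pair[OF w] by linarith
  qed
  finally show ?thesis
    by simp
qed

lemma summable_wp_summand: "2 * cmod z \<le> \<rho> \<Longrightarrow> wp_summand z summable_on L"
  using norm_wp_summand_diff_le[of _ 0 z] nonzero_mem small_le_norm_mem
  by (intro majorant_inverse_cube(1)[of _ "48 * cmod z"]) (simp add: wp_summand_def)

lemma summable_zeta_summand: "2 * cmod z \<le> \<rho> \<Longrightarrow> zeta_summand z summable_on L"
  using norm_zeta_summand_le nonzero_mem small_le_norm_mem
  by (intro majorant_inverse_cube(1)[of _ "2 * cmod z ^ 2"]) auto

lemma norm_wp_reg_le:
  "2 * cmod z \<le> \<rho> \<Longrightarrow> cmod (wp_reg z) \<le> 52 * inverse_cube_sum / \<rho> * cmod z ^ 2"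
  using norm_infsum_le_pairs[OF summable_wp_summand, of z "104 * cmod z ^ 2"]
    norm_wp_summand_pair_le nonzero_mem small_le_norm_mem
  by (simp add: wp_reg_def mult_ac)

lemma norm_zeta_reg_le:
  "2 * cmod z \<le> \<rho> \<Longrightarrow> cmod (zeta_reg z) \<le> 4 * inverse_cube_sum / \<rho> * cmod z ^ 3"
  using norm_infsum_le_pairs[OF summable_zeta_summand, of z "8 * cmod z ^ 3"]
    norm_zeta_summand_pair_le nonzero_mem small_le_norm_mem
  by (simp add: zeta_reg_def mult_ac)

lemma norm_wp_reg_diff_le:
  assumes "2 * cmod s \<le> \<rho>" "2 * cmod t \<le> \<rho>"
  shows "cmod (wp_reg t - wp_reg s) \<le> 48 * inverse_cube_sum * cmod (t - s)"
proof -
  have bound: "\<And>w. w \<in> L \<Longrightarrow> cmod (wp_summand t w - wp_summand s w) \<le> 48 * cmod (t - s) / cmod w ^ 3"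
    using assms norm_wp_summand_diff_le nonzero_mem small_le_norm_mem by blast
  have "wp_reg t = (\<Sum>\<^sub>\<infinity>w\<in>L. (wp_summand t w - wp_summand s w) + wp_summand s w)"
    by (simp add: wp_reg_def)
  also have "\<dots> = (\<Sum>\<^sub>\<infinity>w\<in>L. wp_summand t w - wp_summand s w) + wp_reg s"
    unfolding wp_reg_def by (rule infsum_add[OF majorant_inverse_cube(1)[OF bound] summable_wp_summand[OF assms(1)]])
  finally have "cmod (wp_reg t - wp_reg s) = cmod (\<Sum>\<^sub>\<infinity>w\<in>L. wp_summand t w - wp_summand s w)"
    by simp
  also have "\<dots> \<le> 48 * cmod (t - s) * inverse_cube_sum"
    by (rule majorant_inverse_cube(2)[OF bound])
  finally show ?thesis
    by (simp add: mult_ac)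
qed

lemma norm_wp_reg_le_if_bounded:
  assumes z: "cmod z \<le> D" and sep: "\<And>w. w \<in> L \<Longrightarrow> cmod w \<le> 2 * cmod (z - w)"
  shows "cmod (wp_reg z) \<le> 4 * D * (2 + D / \<rho>) * inverse_cube_sum"
  unfolding wp_reg_def
proof (rule majorant_inverse_cube(2))
  fix w assume w: "w \<in> L"
  have "0 < cmod w" "\<rho> \<le> cmod w"
    using w nonzero_mem \<rho>_le_norm by auto
  have "0 \<le> D"
    using z norm_ge_zero order_trans by blast
  have "cmod (wp_summand z w) \<le> 4 * cmod z * (2 * cmod w + cmod z) / cmod w ^ 4"
    using norm_wp_summand_le nonzero_mem[OF w] sep[OF w] by blast
  also have "\<dots> \<le> 4 * D * (2 * cmod w + D) / cmod w ^ 4"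
    using z \<open>0 \<le> D\<close> by (intro divide_right_mono mult_mono add_left_mono) auto
  also have "\<dots> = 4 * D * (2 + D / cmod w) / cmod w ^ 3"
    using \<open>0 < cmod w\<close> by (simp add: field_simps power_eq_if)
  also have "\<dots> \<le> 4 * D * (2 + D / \<rho>) / cmod w ^ 3"
    using \<open>0 \<le> D\<close> \<open>0 < cmod w\<close> \<open>\<rho> \<le> cmod w\<close> \<rho>_pos
    by (intro divide_right_mono mult_left_mono add_left_mono divide_left_mono) auto
  finally show "cmod (wp_summand z w) \<le> 4 * D * (2 + D / \<rho>) / cmod w ^ 3" .
qed

lemma norm_wp_reg_le_if_square_summable:
  assumes S2: "(\<lambda>w. 1 / cmod w ^ 2) summable_on L"
    and sep: "\<And>w. w \<in> L \<Longrightarrow> cmod w \<le> 2 * cmod (z - w)"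
  shows "cmod (wp_reg z) \<le> 5 * (\<Sum>\<^sub>\<infinity>w\<in>L. 1 / cmod w ^ 2)"
  unfolding wp_reg_def
proof (rule norm_infsum_le_majorant[OF S2])
  fix w assume w: "w \<in> L"
  have "0 < cmod w"
    using w nonzero_mem by auto
  then have "(cmod w / 2)\<^sup>2 \<le> cmod (z - w) ^ 2"
    using sep[OF w] by (intro power_mono) auto
  then have "1 / cmod (z - w) ^ 2 \<le> 4 / cmod w ^ 2"
    using \<open>0 < cmod w\<close> by (simp add: divide_simps power_divide)
  then show "cmod (wp_summand z w) \<le> 5 * (1 / cmod w ^ 2)"
    using norm_triangle_ineq4[of "1 / (z - w)\<^sup>2" "1 / w\<^sup>2"]
    by (simp add: wp_summand_def norm_divide norm_power)
qed

lemma bij_betw_cnj: "bij_betw cnj L L"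
  by (rule bij_betwI[where g = cnj]) (simp_all add: Pi_iff cnj_mem)

lemma wp_reg_cnj: "wp_reg (cnj z) = cnj (wp_reg z)"
proof -
  have "cnj (wp_reg z) = (\<Sum>\<^sub>\<infinity>w\<in>L. wp_summand (cnj z) (cnj w))"
    by (simp add: wp_reg_def wp_summand_def flip: infsum_cnj)
  also have "\<dots> = wp_reg (cnj z)"
    using infsum_reindex_bij_betw[OF bij_betw_cnj, of "wp_summand (cnj z)"] by (simp add: wp_reg_def)
  finally show ?thesis ..
qed

lemma wp_reg_uminus: "wp_reg (- z) = wp_reg z"
proof -
  have "wp_summand (- z) w = wp_summand z (- w)" for w
    by (simp add: wp_summand_def power2_commute add.commute)
  then show ?thesis
    by (simp add: wp_reg_def infsum_reflect)
qed

lemma Im_wp_reg_axis: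
  assumes "u = 1 \<or> u = \<i>"
  shows "Im (wp_reg (u * complex_of_real t)) = 0"
proof -
  have "cnj (u * complex_of_real t) = u * complex_of_real t \<or> cnj (u * complex_of_real t) = - (u * complex_of_real t)"
    using assms by auto
  then have "cnj (wp_reg (u * complex_of_real t)) = wp_reg (u * complex_of_real t)"
    using wp_reg_cnj[of "u * complex_of_real t"] wp_reg_uminus[of "u * complex_of_real t"] by auto
  then have "Im (cnj (wp_reg (u * complex_of_real t))) = Im (wp_reg (u * complex_of_real t))"
    by simp
  then show ?thesis
    by simp
qed

lemma zeta_expansion_error:
  fixes \<kappa> \<eta> :: complex
  obtains C where "0 \<le> C" and "\<And>a. a \<noteq> 0 \<Longrightarrow> 2 * cmod a \<le> \<rho> \<Longrightarrow> cmod a \<le> 1 \<Longrightarrow>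
    cmod ((\<kappa> * zeta_lat a - \<eta> * a)\<^sup>2 - (\<kappa>\<^sup>2 * wp_lat a - 2 * \<kappa> * \<eta>)) \<le> C * cmod a ^ 2"
proof -
  define H G where "H = 52 * inverse_cube_sum / \<rho>" and "G = 4 * inverse_cube_sum / \<rho>"
  have "0 \<le> G" "0 \<le> H"
    using inverse_cube_sum_nonneg \<rho>_pos by (simp_all add: G_def H_def)
  define C where "C = 2 * cmod \<kappa> ^ 2 * G + (cmod \<kappa> * G + cmod \<eta>)\<^sup>2 + cmod \<kappa> ^ 2 * H"
  have "0 \<le> C"
    using \<open>0 \<le> G\<close> \<open>0 \<le> H\<close> by (simp add: C_def)
  moreover have "cmod ((\<kappa> * zeta_lat a - \<eta> * a)\<^sup>2 - (\<kappa>\<^sup>2 * wp_lat a - 2 * \<kappa> * \<eta>)) \<le> C * cmod a ^ 2"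
    if a: "a \<noteq> 0" "2 * cmod a \<le> \<rho>" "cmod a \<le> 1" for a
  proof -
    define A B E where "A = 2 * \<kappa>\<^sup>2 * zeta_reg a / a" and "B = \<kappa>\<^sup>2 * wp_reg a"
      and "E = \<kappa> * zeta_reg a - \<eta> * a"
    have "(\<kappa> * zeta_lat a - \<eta> * a)\<^sup>2 - (\<kappa>\<^sup>2 * wp_lat a - 2 * \<kappa> * \<eta>) = A + E\<^sup>2 - B"
      unfolding zeta_lat_def wp_lat_def A_def B_def E_def by (rule zeta_expansion_eq[OF a(1)])
    then have "cmod ((\<kappa> * zeta_lat a - \<eta> * a)\<^sup>2 - (\<kappa>\<^sup>2 * wp_lat a - 2 * \<kappa> * \<eta>))
                 \<le> cmod A + cmod (E\<^sup>2) + cmod B"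
      using norm_triangle_ineq4[of "A + E\<^sup>2" B] norm_triangle_ineq[of A "E\<^sup>2"] by simp
    moreover have "cmod A \<le> 2 * cmod \<kappa> ^ 2 * G * cmod a ^ 2"
    proof -
      have "cmod A = 2 * cmod \<kappa> ^ 2 * cmod (zeta_reg a) / cmod a"
        by (simp add: A_def norm_mult norm_divide norm_power)
      also have "\<dots> \<le> 2 * cmod \<kappa> ^ 2 * (G * cmod a ^ 3) / cmod a"
        using norm_zeta_reg_le[OF a(2)] by (intro divide_right_mono mult_left_mono) (auto simp: G_def)
      finally show ?thesis
        using a(1) by (simp add: power2_eq_square power3_eq_cube)
    qed
    moreover have "cmod (E\<^sup>2) \<le> (cmod \<kappa> * G + cmod \<eta>)\<^sup>2 * cmod a ^ 2"
    proof -
      have "cmod a ^ 3 \<le> cmod a ^ 1"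
        using a(3) by (intro power_decreasing) auto
      then have "cmod (zeta_reg a) \<le> G * cmod a"
        using norm_zeta_reg_le[OF a(2)] \<open>0 \<le> G\<close> mult_left_mono order_trans by (fastforce simp: G_def)
      then have "cmod E \<le> (cmod \<kappa> * G + cmod \<eta>) * cmod a"
        using norm_triangle_ineq4[of "\<kappa> * zeta_reg a" "\<eta> * a"] mult_left_mono[of _ _ "cmod \<kappa>"]
        by (fastforce simp: E_def norm_mult algebra_simps)
      then show ?thesis
        by (simp add: norm_power power_mult_distrib[symmetric] power_mono)
    qed
    moreover have "cmod B \<le> cmod \<kappa> ^ 2 * H * cmod a ^ 2"
      using norm_wp_reg_le[OF a(2)] mult_left_mono[of _ _ "cmod \<kappa> ^ 2"]
      by (fastforce simp: B_def H_def norm_mult norm_power mult_ac)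
    ultimately show ?thesis
      by (simp add: C_def algebra_simps)
  qed
  ultimately show thesis
    using that by blast
qed

end

section \<open>Inverting wp on a branch\<close>

text \<open>The axis carrying the solution of wp a = V: the real one for V > 0, the imaginary one for V < 0.\<close>

definition axis_unit :: "real \<Rightarrow> complex" where
  "axis_unit V = (if 0 < V then 1 else \<i>)"

lemma axis_unit_cases: "axis_unit V = 1 \<or> axis_unit V = \<i>"
  by (simp add: axis_unit_def)

lemma axis_unit_sq_mult: "(axis_unit V)\<^sup>2 * complex_of_real V = complex_of_real \<bar>V\<bar>"
  by (simp add: axis_unit_def)

context weierstrass_lattice
begin

definition axis_remainder :: "complex \<Rightarrow> real \<Rightarrow> real" where
  "axis_remainder u t = Re (u\<^sup>2 * wp_reg (u * complex_of_real t))"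

definition axis_wp :: "complex \<Rightarrow> real \<Rightarrow> real" where
  "axis_wp u t = 1 / t\<^sup>2 + axis_remainder u t"

lemma wp_lat_axis:
  assumes "u = 1 \<or> u = \<i>" "t \<noteq> 0"
  shows "u\<^sup>2 * wp_lat (u * complex_of_real t) = complex_of_real (axis_wp u t)"
proof -
  have "u\<^sup>2 * (1 / (u * complex_of_real t)\<^sup>2) = complex_of_real (1 / t\<^sup>2)"
    using assms by (auto simp: power_mult_distrib)
  moreover have "u\<^sup>2 * wp_reg (u * complex_of_real t) = complex_of_real (axis_remainder u t)"
    using assms(1) Im_wp_reg_axis[OF assms(1), of t] by (auto intro!: complex_eqI simp: axis_remainder_def)
  ultimately show ?thesis
    by (simp add: wp_lat_def axis_wp_def distrib_left)
qed

lemma abs_axis_remainder_le: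
  assumes "u = 1 \<or> u = \<i>" "2 * \<bar>t\<bar> \<le> \<rho>"
  shows "\<bar>axis_remainder u t\<bar> \<le> 52 * inverse_cube_sum / \<rho> * t\<^sup>2"
proof -
  have "\<bar>axis_remainder u t\<bar> \<le> cmod (wp_reg (u * complex_of_real t))"
    using assms(1) abs_Re_le_cmod by (auto simp: axis_remainder_def norm_mult)
  also have "\<dots> \<le> 52 * inverse_cube_sum / \<rho> * t\<^sup>2"
    using assms norm_wp_reg_le[of "u * complex_of_real t"] by (auto simp: norm_mult)
  finally show ?thesis .
qed

lemma lipschitz_on_axis_remainder:
  assumes "u = 1 \<or> u = \<i>"
  shows "(48 * inverse_cube_sum)-lipschitz_on {- \<rho> / 2..\<rho> / 2} (axis_remainder u)"
proof (rule lipschitz_onI)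
  fix s t assume "s \<in> {- \<rho> / 2..\<rho> / 2}" "t \<in> {- \<rho> / 2..\<rho> / 2}"
  then have st: "2 * cmod (u * complex_of_real s) \<le> \<rho>" "2 * cmod (u * complex_of_real t) \<le> \<rho>"
    using assms by (auto simp: norm_mult)
  define d where "d = wp_reg (u * complex_of_real s) - wp_reg (u * complex_of_real t)"
  have "dist (axis_remainder u s) (axis_remainder u t) = \<bar>Re (u\<^sup>2 * d)\<bar>"
    by (simp add: axis_remainder_def dist_real_def d_def right_diff_distrib)
  also have "\<dots> \<le> cmod d"
    using assms abs_Re_le_cmod[of "u\<^sup>2 * d"] by (auto simp: norm_mult norm_power)
  also have "\<dots> \<le> 48 * inverse_cube_sum * cmod (u * complex_of_real s - u * complex_of_real t)"
    using norm_wp_reg_diff_le[OF st(2,1)] by (simp add: d_def)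
  also have "\<dots> = 48 * inverse_cube_sum * dist s t"
    using assms by (auto simp: dist_real_def norm_mult simp flip: right_diff_distrib of_real_diff)
  finally show "dist (axis_remainder u s) (axis_remainder u t) \<le> 48 * inverse_cube_sum * dist s t" .
qed (simp add: inverse_cube_sum_nonneg)

definition small_radius :: "real \<Rightarrow> bool" where
  "small_radius r \<longleftrightarrow> 0 < r \<and> 2 * r \<le> \<rho> \<and> r \<le> 1 \<and>
     52 * inverse_cube_sum / \<rho> * r ^ 4 < 1 \<and> 48 * inverse_cube_sum * r ^ 3 < 2"

lemma axis_inverse_square:
  assumes u: "u = 1 \<or> u = \<i>" and "small_radius r"
  shows "inj_on (axis_wp u) {0<..r}"
    and "\<And>t. t \<in> {0<..r} \<Longrightarrow> 0 < axis_wp u t \<and> axis_wp u t * t\<^sup>2 \<le> 2"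
    and "\<And>V. 1 / r\<^sup>2 + 52 * inverse_cube_sum / \<rho> \<le> V \<Longrightarrow> \<exists>t\<in>{0<..r}. axis_wp u t = V"
proof -
  have r: "0 < r" "2 * r \<le> \<rho>" "r \<le> 1"
    and small: "52 * inverse_cube_sum / \<rho> * r ^ 4 < 1" "48 * inverse_cube_sum * r ^ 3 < 2"
    using \<open>small_radius r\<close> by (simp_all add: small_radius_def)
  have bound: "\<bar>axis_remainder u t\<bar> \<le> 52 * inverse_cube_sum / \<rho> * t\<^sup>2" if "t \<in> {0<..r}" for t
    using abs_axis_remainder_le[OF u] that r by auto
  have lip: "(48 * inverse_cube_sum)-lipschitz_on {0<..r} (axis_remainder u)"
    using r by (intro lipschitz_on_subset[OF lipschitz_on_axis_remainder[OF u]]) auto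
  show "inj_on (axis_wp u) {0<..r}"
    using inj_on_inverse_square_plus_lipschitz[OF r(1) small(2) lip] by (simp add: axis_wp_def[abs_def])
  have "52 * inverse_cube_sum / \<rho> * t\<^sup>2 \<le> 52 * inverse_cube_sum / \<rho>" if "t \<in> {0<..r}" for t
    using that r inverse_cube_sum_nonneg \<rho>_pos by (intro mult_left_le power_le_one) auto
  then have "\<bar>axis_remainder u t\<bar> \<le> 52 * inverse_cube_sum / \<rho>" if "t \<in> {0<..r}" for t
    using bound[OF that] that by (meson order_trans)
  then show "\<exists>t\<in>{0<..r}. axis_wp u t = V" if "1 / r\<^sup>2 + 52 * inverse_cube_sum / \<rho> \<le> V" for V
    using ex_inverse_square_plus_eq[OF r(1) _ lipschitz_on_continuous_on[OF lip] that]
    by (simp add: axis_wp_def)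
  fix t assume t: "t \<in> {0<..r}"
  have "52 * inverse_cube_sum / \<rho> * t ^ 4 \<le> 52 * inverse_cube_sum / \<rho> * r ^ 4"
    using t inverse_cube_sum_nonneg \<rho>_pos by (intro mult_left_mono power_mono) auto
  moreover have "\<bar>axis_remainder u t * t\<^sup>2\<bar> \<le> 52 * inverse_cube_sum / \<rho> * t ^ 4"
    using mult_right_mono[OF bound[OF t], of "t\<^sup>2"] by (simp add: abs_mult power4_eq_xxxx power2_eq_square mult_ac)
  moreover have "axis_wp u t * t\<^sup>2 = 1 + axis_remainder u t * t\<^sup>2"
    using t by (simp add: axis_wp_def field_simps)
  ultimately have "0 < axis_wp u t * t\<^sup>2 \<and> axis_wp u t * t\<^sup>2 \<le> 2"
    using small(1) by auto
  then show "0 < axis_wp u t \<and> axis_wp u t * t\<^sup>2 \<le> 2"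
    by (simp add: zero_less_mult_iff)
qed

lemma wp_lat_axis_unit:
  assumes "t \<noteq> 0" "axis_wp (axis_unit V) t = \<bar>V\<bar>"
  shows "wp_lat (axis_unit V * complex_of_real t) = complex_of_real V"
proof -
  have "(axis_unit V)\<^sup>2 * wp_lat (axis_unit V * complex_of_real t) = complex_of_real \<bar>V\<bar>"
    using wp_lat_axis[OF axis_unit_cases assms(1)] by (simp only: assms(2))
  also have "\<dots> = (axis_unit V)\<^sup>2 * complex_of_real V"
    by (rule axis_unit_sq_mult[symmetric])
  finally show ?thesis
    using axis_unit_cases[of V] by auto
qed

end

locale weierstrass_branch = weierstrass_lattice +
  fixes B :: "complex set" and r0 :: real
  assumes r0_pos: "0 < r0"
    and axis_mem: "\<And>u t. u = 1 \<or> u = \<i> \<Longrightarrow> 0 < t \<Longrightarrow> t \<le> r0 \<Longrightarrow> u * complex_of_real t \<in> B"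
    and near_zero_on_axis:
      "\<And>z. z \<in> B \<Longrightarrow> cmod z < r0 \<Longrightarrow> \<exists>u t. (u = 1 \<or> u = \<i>) \<and> 0 < t \<and> z = u * complex_of_real t"
    and bounded_wp_reg: "bounded (wp_reg ` B)"
begin

lemma ex_branch_threshold:
  obtains r R where "small_radius r" "r \<le> r0" "0 < R" "1 / r\<^sup>2 + 52 * inverse_cube_sum / \<rho> \<le> R"
    and "\<And>a V. a \<in> B \<Longrightarrow> wp_lat a = complex_of_real V \<Longrightarrow> R \<le> \<bar>V\<bar> \<Longrightarrow> cmod a < r"
proof -
  have small: "\<forall>\<^sub>F r in at_right 0. g r < c" if "(g \<longlongrightarrow> 0) (at_right 0)" "0 < c" for g :: "real \<Rightarrow> real" and c
    using order_tendstoD(2)[OF that] .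
  have "\<forall>\<^sub>F r in at_right 0. 0 < r \<and> 2 * r < \<rho> \<and> r < r0 \<and> r < 1 \<and>
          52 * inverse_cube_sum / \<rho> * r ^ 4 < 1 \<and> 48 * inverse_cube_sum * r ^ 3 < 2"
    using \<rho>_pos r0_pos
    by (intro eventually_conj eventually_at_right_less small) (auto intro!: tendsto_eq_intros)
  then obtain r where "0 < r \<and> 2 * r < \<rho> \<and> r < r0 \<and> r < 1 \<and>
          52 * inverse_cube_sum / \<rho> * r ^ 4 < 1 \<and> 48 * inverse_cube_sum * r ^ 3 < 2"
    using eventually_happens[of _ "at_right (0::real)"] by force
  then have "small_radius r" "r \<le> r0"
    by (simp_all add: small_radius_def)
  obtain M where M: "\<And>z. z \<in> B \<Longrightarrow> cmod (wp_reg z) \<le> M"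
    using bounded_wp_reg by (auto simp: bounded_iff)
  define R where "R = 1 / r\<^sup>2 + \<bar>M\<bar> + 52 * inverse_cube_sum / \<rho> + 1"
  have "0 < r" "0 \<le> 52 * inverse_cube_sum / \<rho>"
    using \<open>small_radius r\<close> inverse_cube_sum_nonneg \<rho>_pos by (simp_all add: small_radius_def)
  have near: "cmod a < r" if "a \<in> B" "wp_lat a = complex_of_real V" "R \<le> \<bar>V\<bar>" for a V
  proof (rule ccontr)
    assume "\<not> cmod a < r"
    then have "r\<^sup>2 \<le> cmod a ^ 2" "0 < cmod a"
      using \<open>0 < r\<close> by (auto intro: power_mono)
    then have "1 / cmod a ^ 2 \<le> 1 / r\<^sup>2"
      using \<open>0 < r\<close> by (intro divide_left_mono) auto
    then have "cmod (wp_lat a) \<le> 1 / r\<^sup>2 + M"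
      using M[OF that(1)] norm_triangle_ineq[of "1 / a\<^sup>2" "wp_reg a"]
      by (simp add: wp_lat_def norm_divide norm_power)
    then have "\<bar>V\<bar> \<le> 1 / r\<^sup>2 + M"
      using that(2) by simp
    then show False
      using that(3) \<open>0 \<le> 52 * inverse_cube_sum / \<rho>\<close> abs_ge_self[of M] unfolding R_def by linarith
  qed
  show thesis
  proof (rule that[OF \<open>small_radius r\<close> \<open>r \<le> r0\<close> _ _ near])
    have "0 \<le> 1 / r\<^sup>2"
      by simp
    then show "0 < R" "1 / r\<^sup>2 + 52 * inverse_cube_sum / \<rho> \<le> R"
      using \<open>0 \<le> 52 * inverse_cube_sum / \<rho>\<close> abs_ge_zero[of M] unfolding R_def by linarith+
  qed
qed

lemma branch_solution_on_axis:
  assumes "small_radius r" "r \<le> r0" and a: "a \<in> B" "wp_lat a = complex_of_real V" "cmod a < r"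
  shows "\<exists>t\<in>{0<..r}. a = axis_unit V * complex_of_real t \<and> axis_wp (axis_unit V) t = \<bar>V\<bar>"
proof -
  obtain u t where u: "u = 1 \<or> u = \<i>" and t: "0 < t" and a_eq: "a = u * complex_of_real t"
    using near_zero_on_axis[OF a(1)] a(3) \<open>r \<le> r0\<close> by force
  have "t \<le> r"
    using a(3) u t by (auto simp: a_eq norm_mult)
  have "u\<^sup>2 * wp_lat a = complex_of_real (axis_wp u t)"
    using wp_lat_axis[OF u, of t] t by (simp only: a_eq)
  moreover obtain \<sigma> where "u\<^sup>2 = complex_of_real \<sigma>" "u = 1 \<and> \<sigma> = 1 \<or> u = \<i> \<and> \<sigma> = -1"
    using u by auto
  ultimately have "complex_of_real (\<sigma> * V) = complex_of_real (axis_wp u t)"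
    by (simp only: a(2) of_real_mult)
  then have "\<sigma> * V = axis_wp u t"
    by (simp only: of_real_eq_iff)
  moreover have "0 < axis_wp u t"
    using axis_inverse_square(2)[OF u \<open>small_radius r\<close>, of t] t \<open>t \<le> r\<close> by auto
  ultimately have "u = axis_unit V" and "axis_wp u t = \<bar>V\<bar>"
    using \<open>u = 1 \<and> \<sigma> = 1 \<or> u = \<i> \<and> \<sigma> = -1\<close> by (auto simp: axis_unit_def)
  then show ?thesis
    using t \<open>t \<le> r\<close> a_eq by auto
qed

text \<open>For large |V| a solution of wp a = V on the branch lies close to 0, hence on an axis, where
  wp is injective; the sign of V selects the axis.\<close>

lemma wp_lat_branch_inverse:
  obtains R where "0 < R"
    and "\<And>V. R \<le> \<bar>V\<bar> \<Longrightarrow> \<exists>!a. a \<in> B \<and> wp_lat a = complex_of_real V"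
    and "\<And>V a. R \<le> \<bar>V\<bar> \<Longrightarrow> a \<in> B \<Longrightarrow> wp_lat a = complex_of_real V \<Longrightarrow>
           a \<noteq> 0 \<and> 2 * cmod a \<le> \<rho> \<and> cmod a \<le> 1 \<and> \<bar>V\<bar> * cmod a ^ 2 \<le> 2"
proof -
  obtain r R where r: "small_radius r" "r \<le> r0" and R: "0 < R" "1 / r\<^sup>2 + 52 * inverse_cube_sum / \<rho> \<le> R"
    and near: "\<And>a V. a \<in> B \<Longrightarrow> wp_lat a = complex_of_real V \<Longrightarrow> R \<le> \<bar>V\<bar> \<Longrightarrow> cmod a < r"
    by (rule ex_branch_threshold) (rule that)
  note on_axis = branch_solution_on_axis[OF r _ _ near]
  show thesis
  proof (rule that)
    fix V assume V: "R \<le> \<bar>V\<bar>"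
    note axis = axis_inverse_square[OF axis_unit_cases[of V] r(1)]
    obtain t where t: "t \<in> {0<..r}" "axis_wp (axis_unit V) t = \<bar>V\<bar>"
      using axis(3)[of "\<bar>V\<bar>"] V R(2) by auto
    show "\<exists>!a. a \<in> B \<and> wp_lat a = complex_of_real V"
    proof (rule ex1I[of _ "axis_unit V * complex_of_real t"])
      show "axis_unit V * complex_of_real t \<in> B \<and> wp_lat (axis_unit V * complex_of_real t) = complex_of_real V"
        using axis_mem[OF axis_unit_cases] wp_lat_axis_unit t r(2) by simp
    next
      fix a assume "a \<in> B \<and> wp_lat a = complex_of_real V"
      then obtain s where s: "s \<in> {0<..r}" "a = axis_unit V * complex_of_real s"
        "axis_wp (axis_unit V) s = \<bar>V\<bar>"
        using on_axis V by meson
      then show "a = axis_unit V * complex_of_real t"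
        using inj_onD[OF axis(1)] t by simp
    qed
  next
    fix V a assume V: "R \<le> \<bar>V\<bar>" and a: "a \<in> B" "wp_lat a = complex_of_real V"
    then obtain t where t: "t \<in> {0<..r}" "a = axis_unit V * complex_of_real t"
      and eq: "axis_wp (axis_unit V) t = \<bar>V\<bar>"
      using on_axis by meson
    have "cmod a = t"
      using t axis_unit_cases[of V] by (auto simp: norm_mult)
    moreover have "\<bar>V\<bar> * t\<^sup>2 \<le> 2"
      using axis_inverse_square(2)[OF axis_unit_cases[of V] r(1) t(1)] by (simp add: eq)
    ultimately show "a \<noteq> 0 \<and> 2 * cmod a \<le> \<rho> \<and> cmod a \<le> 1 \<and> \<bar>V\<bar> * cmod a ^ 2 \<le> 2"
      using t(1) r(1) by (auto simp: small_radius_def)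
  qed (rule R(1))
qed

theorem zeta_branch_asymptotics:
  fixes \<kappa> \<eta> :: complex
  shows "\<exists>C R. R > 0 \<and> (\<forall>V::real. R \<le> \<bar>V\<bar> \<longrightarrow>
           cmod ((\<kappa> * zeta_lat (THE a. a \<in> B \<and> wp_lat a = complex_of_real V)
                   - \<eta> * (THE a. a \<in> B \<and> wp_lat a = complex_of_real V))\<^sup>2
                 - (\<kappa>\<^sup>2 * complex_of_real V - 2 * \<kappa> * \<eta>)) \<le> C / \<bar>V\<bar>)"
proof -
  obtain R where R: "0 < R"
    and ex1: "\<And>V. R \<le> \<bar>V\<bar> \<Longrightarrow> \<exists>!a. a \<in> B \<and> wp_lat a = complex_of_real V"
    and small: "\<And>V a. R \<le> \<bar>V\<bar> \<Longrightarrow> a \<in> B \<Longrightarrow> wp_lat a = complex_of_real V \<Longrightarrow>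
                  a \<noteq> 0 \<and> 2 * cmod a \<le> \<rho> \<and> cmod a \<le> 1 \<and> \<bar>V\<bar> * cmod a ^ 2 \<le> 2"
    using wp_lat_branch_inverse by blast
  obtain C where "0 \<le> C" and C: "\<And>a. a \<noteq> 0 \<Longrightarrow> 2 * cmod a \<le> \<rho> \<Longrightarrow> cmod a \<le> 1 \<Longrightarrow>
      cmod ((\<kappa> * zeta_lat a - \<eta> * a)\<^sup>2 - (\<kappa>\<^sup>2 * wp_lat a - 2 * \<kappa> * \<eta>)) \<le> C * cmod a ^ 2"
    by (rule zeta_expansion_error[of \<kappa> \<eta>]) (rule that)
  have bound: "cmod ((\<kappa> * zeta_lat (THE a. a \<in> B \<and> wp_lat a = complex_of_real V)
                   - \<eta> * (THE a. a \<in> B \<and> wp_lat a = complex_of_real V))\<^sup>2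
                 - (\<kappa>\<^sup>2 * complex_of_real V - 2 * \<kappa> * \<eta>)) \<le> 2 * C / \<bar>V\<bar>"
    if V: "R \<le> \<bar>V\<bar>" for V
  proof -
    define a where "a = (THE a. a \<in> B \<and> wp_lat a = complex_of_real V)"
    have a_sol: "a \<in> B" "wp_lat a = complex_of_real V"
      using theI'[OF ex1[OF V]] by (simp_all add: a_def)
    note a_small = small[OF V a_sol]
    have "0 < \<bar>V\<bar>"
      using R V by linarith
    then have "cmod a ^ 2 \<le> 2 / \<bar>V\<bar>"
      using a_small by (simp add: le_divide_eq mult.commute)
    have "cmod ((\<kappa> * zeta_lat a - \<eta> * a)\<^sup>2 - (\<kappa>\<^sup>2 * complex_of_real V - 2 * \<kappa> * \<eta>))
            \<le> C * cmod a ^ 2"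
      using C[of a] a_small a_sol(2) by simp
    also have "\<dots> \<le> C * (2 / \<bar>V\<bar>)"
      using \<open>cmod a ^ 2 \<le> 2 / \<bar>V\<bar>\<close> \<open>0 \<le> C\<close> by (rule mult_left_mono)
    also have "\<dots> = 2 * C / \<bar>V\<bar>"
      by simp
    finally show ?thesis
      by (simp only: a_def)
  qed
  show ?thesis
  proof (rule exI[of _ "2 * C"], rule exI[of _ R], intro conjI allI impI)
    show "0 < R"
      by (rule R)
  qed (rule bound)
qed

end

section \<open>The period lattice of the cnoidal profile\<close>

lemma summable_on_int_powr:
  fixes p :: real
  assumes "1 < p"
  shows "(\<lambda>n::int. (1 + \<bar>real_of_int n\<bar>) powr - p) summable_on UNIV"
proof -
  have "summable (\<lambda>n::nat. real n powr - p)"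
    using assms by (simp add: summable_real_powr_iff)
  then have "summable (\<lambda>n::nat. real (Suc n) powr - p)"
    by (subst summable_Suc_iff)
  then have nat: "(\<lambda>n::nat. (1 + real n) powr - p) summable_on UNIV"
    by (intro summable_nonneg_imp_summable_on) (simp_all add: add.commute)
  have "(\<lambda>n::int. (1 + \<bar>real_of_int n\<bar>) powr - p) summable_on range int"
    using nat by (subst summable_on_reindex) (auto simp: o_def)
  moreover have "(\<lambda>n::int. (1 + \<bar>real_of_int n\<bar>) powr - p) summable_on range (\<lambda>n. - int n)"
    using nat by (subst summable_on_reindex) (auto simp: o_def inj_on_def)
  moreover have "(UNIV :: int set) = range int \<union> range (\<lambda>n. - int n)"
    by (auto intro: int_cases2)
  ultimately show ?thesis
    by (metis summable_on_union)
qed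

lemma summable_on_int_pair_powr:
  fixes p :: real
  assumes "1 < p"
  shows "(\<lambda>q. (1 + \<bar>real_of_int (fst q)\<bar>) powr - p * (1 + \<bar>real_of_int (snd q)\<bar>) powr - p)
           summable_on (UNIV :: (int \<times> int) set)"
proof -
  define q :: "int \<Rightarrow> real" where "q n = (1 + \<bar>real_of_int n\<bar>) powr - p" for n
  have q: "q summable_on UNIV"
    unfolding q_def by (rule summable_on_int_powr[OF assms])
  have "((\<lambda>b. q a * q b) has_sum q a * (\<Sum>\<^sub>\<infinity>b. q b)) UNIV" for a
    using q by (intro has_sum_cmult_right) (simp add: summable_iff_has_sum_infsum)
  moreover have "(\<lambda>a. q a * (\<Sum>\<^sub>\<infinity>b. q b)) summable_on UNIV"
    using q by (rule summable_on_cmult_left)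
  ultimately have "(\<lambda>(a, b). q a * q b) summable_on UNIV \<times> UNIV"
    by (intro summable_on_SigmaI[where g = "\<lambda>a. q a * (\<Sum>\<^sub>\<infinity>b. q b)"]) (auto simp: q_def)
  then show ?thesis
    by (simp add: q_def case_prod_unfold)
qed

lemma one_plus_abs_mult_le:
  fixes a b :: int
  assumes "(a, b) \<noteq> (0, 0)"
  shows "(1 + \<bar>real_of_int a\<bar>) * (1 + \<bar>real_of_int b\<bar>) \<le> 4 * (real_of_int a ^ 2 + real_of_int b ^ 2)"
proof -
  have int_le_sq: "\<bar>n\<bar> \<le> n\<^sup>2" for n :: int
  proof (cases "n = 0")
    case False
    then have "\<bar>n\<bar> * 1 \<le> \<bar>n\<bar> * \<bar>n\<bar>"
      by (intro mult_left_mono) auto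
    then show ?thesis
      by (simp add: power2_eq_square)
  qed simp
  have le_sq: "\<bar>real_of_int n\<bar> \<le> real_of_int n ^ 2" for n :: int
    using int_le_sq[of n] by (metis of_int_abs of_int_le_iff of_int_power)
  have "1 \<le> a\<^sup>2 + b\<^sup>2"
    using assms int_le_sq[of a] int_le_sq[of b] by (cases "a = 0") auto
  then have "1 \<le> real_of_int a ^ 2 + real_of_int b ^ 2"
    by (metis of_int_1 of_int_add of_int_le_iff of_int_power)
  moreover have "\<bar>real_of_int a\<bar> * \<bar>real_of_int b\<bar> \<le> (real_of_int a ^ 2 + real_of_int b ^ 2) / 2"
    using sum_squares_bound[of "\<bar>real_of_int a\<bar>" "\<bar>real_of_int b\<bar>"] by (simp add: power2_eq_square)
  ultimately show ?thesis
    using le_sq[of a] le_sq[of b] by (simp add: algebra_simps)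
qed

definition lattice_pt :: "real \<Rightarrow> real \<Rightarrow> int \<times> int \<Rightarrow> complex" where
  "lattice_pt K K' p = of_int (fst p) * 2 * complex_of_real K + of_int (snd p) * 2 * \<i> * complex_of_real K'"

lemma Re_lattice_pt [simp]: "Re (lattice_pt K K' p) = 2 * of_int (fst p) * K"
  by (simp add: lattice_pt_def)

lemma Im_lattice_pt [simp]: "Im (lattice_pt K K' p) = 2 * of_int (snd p) * K'"
  by (simp add: lattice_pt_def)

lemma norm_lattice_pt_sq:
  "cmod (lattice_pt K K' p) ^ 2 = 4 * (of_int (fst p) ^ 2 * K\<^sup>2 + of_int (snd p) ^ 2 * K'\<^sup>2)"
  by (simp add: cmod_power2 power_mult_distrib)

lemma lattice_pt_eq_iff:
  assumes "0 < K" "0 < K'"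
  shows "lattice_pt K K' p = lattice_pt K K' q \<longleftrightarrow> p = q"
  using assms by (auto simp: complex_eq_iff prod_eq_iff)

lemma lattice_pt_eq_0_iff:
  assumes "0 < K" "0 < K'"
  shows "lattice_pt K K' p = 0 \<longleftrightarrow> p = (0, 0)"
  using assms by (auto simp: complex_eq_iff prod_eq_iff)

lemma lattice_pt_norm_sq_ge:
  assumes "0 < K" "0 < K'" "p \<noteq> (0, 0)"
  shows "(min K K')\<^sup>2 * ((1 + \<bar>of_int (fst p)\<bar>) * (1 + \<bar>of_int (snd p)\<bar>)) \<le> cmod (lattice_pt K K' p) ^ 2"
proof -
  define a b \<mu> where "a = real_of_int (fst p)" and "b = real_of_int (snd p)" and "\<mu> = min K K'"
  have "\<mu>\<^sup>2 \<le> K\<^sup>2" "\<mu>\<^sup>2 \<le> K'\<^sup>2"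
    using assms by (simp_all add: \<mu>_def power_mono)
  then have "\<mu>\<^sup>2 * a\<^sup>2 \<le> K\<^sup>2 * a\<^sup>2" "\<mu>\<^sup>2 * b\<^sup>2 \<le> K'\<^sup>2 * b\<^sup>2"
    by (simp_all add: mult_right_mono)
  then have "\<mu>\<^sup>2 * (4 * (a\<^sup>2 + b\<^sup>2)) \<le> cmod (lattice_pt K K' p) ^ 2"
    by (simp add: norm_lattice_pt_sq a_def b_def algebra_simps)
  moreover have "(1 + \<bar>a\<bar>) * (1 + \<bar>b\<bar>) \<le> 4 * (a\<^sup>2 + b\<^sup>2)"
    using one_plus_abs_mult_le[of "fst p" "snd p"] assms(3) by (simp add: a_def b_def)
  then have "\<mu>\<^sup>2 * ((1 + \<bar>a\<bar>) * (1 + \<bar>b\<bar>)) \<le> \<mu>\<^sup>2 * (4 * (a\<^sup>2 + b\<^sup>2))"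
    by (rule mult_left_mono) simp
  ultimately show ?thesis
    by (simp add: a_def b_def \<mu>_def)
qed

lemma square_powr_three_halves:
  fixes x :: real
  assumes "0 \<le> x"
  shows "(x\<^sup>2) powr (3 / 2) = x ^ 3"
proof (cases "x = 0")
  case False
  then have "0 < x"
    using assms by simp
  then have "(x\<^sup>2) powr (3 / 2) = (x powr 2) powr (3 / 2)"
    using powr_realpow[of x 2] by simp
  also have "\<dots> = x powr 3"
    by (simp add: powr_powr)
  also have "\<dots> = x ^ 3"
    using powr_realpow[OF \<open>0 < x\<close>, of 3] by simp
  finally show ?thesis .
qed simp

lemma inverse_cube_norm_lattice_pt_le:
  assumes K: "0 < K" "0 < K'" and p: "p \<noteq> (0, 0)"
  shows "1 / cmod (lattice_pt K K' p) ^ 3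
           \<le> 1 / min K K' ^ 3 * ((1 + \<bar>of_int (fst p)\<bar>) powr - (3 / 2) * (1 + \<bar>of_int (snd p)\<bar>) powr - (3 / 2))"
proof -
  define \<mu> P where "\<mu> = min K K'" and "P = (1 + \<bar>real_of_int (fst p)\<bar>) * (1 + \<bar>real_of_int (snd p)\<bar>)"
  have "0 < \<mu>"
    using K by (simp add: \<mu>_def)
  have "(\<mu>\<^sup>2 * P) powr (3 / 2) \<le> (cmod (lattice_pt K K' p) ^ 2) powr (3 / 2)"
    using lattice_pt_norm_sq_ge[OF K p] by (intro powr_mono2) (auto simp: \<mu>_def P_def)
  then have le: "\<mu> ^ 3 * P powr (3 / 2) \<le> cmod (lattice_pt K K' p) ^ 3"
    using \<open>0 < \<mu>\<close> by (simp add: P_def powr_mult square_powr_three_halves)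
  have "0 < P"
    by (simp add: P_def add_pos_nonneg)
  then have pos: "0 < \<mu> ^ 3 * P powr (3 / 2)"
    using \<open>0 < \<mu>\<close> by simp
  have "1 / cmod (lattice_pt K K' p) ^ 3 \<le> 1 / (\<mu> ^ 3 * P powr (3 / 2))"
    by (rule divide_left_mono[OF le]) (simp_all add: mult_pos_pos[OF less_le_trans[OF pos le] pos])
  then show ?thesis
    by (simp add: \<mu>_def P_def powr_mult powr_minus_divide)
qed

lemma weierstrass_lattice_subset:
  assumes "weierstrass_lattice L' \<rho>" "L \<subseteq> L'"
    and "\<And>w. w \<in> L \<Longrightarrow> - w \<in> L" "\<And>w. w \<in> L \<Longrightarrow> cnj w \<in> L"
  shows "weierstrass_lattice L \<rho>"
proof -
  interpret L': weierstrass_lattice L' \<rho>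
    by (fact assms(1))
  show ?thesis
  proof
    show "(\<lambda>w. 1 / cmod w ^ 3) summable_on L"
      using L'.summable_inverse_cube assms(2) by (rule summable_on_subset)
  qed (use assms(2-4) L'.\<rho>_pos L'.\<rho>_le_norm in auto)
qed

lemma weierstrass_lattice_rect:
  assumes K: "0 < K" "0 < K'"
  shows "weierstrass_lattice (range (lattice_pt K K') - {0}) (min K K')"
proof
  fix w assume "w \<in> range (lattice_pt K K') - {0}"
  then obtain p where w: "w = lattice_pt K K' p" and p: "p \<noteq> (0, 0)"
    using lattice_pt_eq_0_iff[OF K] by auto
  have "- w = lattice_pt K K' (- fst p, - snd p)" "cnj w = lattice_pt K K' (fst p, - snd p)"
    by (simp_all add: w lattice_pt_def)
  moreover have "- w \<noteq> 0" "cnj w \<noteq> 0" "w \<noteq> 0"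
    using p lattice_pt_eq_0_iff[OF K] by (auto simp: w)
  ultimately show "- w \<in> range (lattice_pt K K') - {0}" "cnj w \<in> range (lattice_pt K K') - {0}"
    by auto
  have "1 * 1 \<le> (1 + \<bar>real_of_int (fst p)\<bar>) * (1 + \<bar>real_of_int (snd p)\<bar>)"
    by (intro mult_mono) auto
  then have "(min K K')\<^sup>2 * 1 \<le> (min K K')\<^sup>2 * ((1 + \<bar>of_int (fst p)\<bar>) * (1 + \<bar>of_int (snd p)\<bar>))"
    by (intro mult_left_mono) auto
  then have "(min K K')\<^sup>2 \<le> cmod w ^ 2"
    using lattice_pt_norm_sq_ge[OF K p] by (simp add: w)
  then show "min K K' \<le> cmod w"
    by (rule power2_le_imp_le) simp
next
  show "0 < min K K'"
    using K by simp
next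
  define c where "c = 1 / min K K' ^ 3"
  have "(\<lambda>p. 1 / cmod (lattice_pt K K' p) ^ 3) summable_on (UNIV - {(0, 0)})"
  proof (rule summable_on_comparison_test)
    show "(\<lambda>p. c * ((1 + \<bar>of_int (fst p)\<bar>) powr - (3 / 2) * (1 + \<bar>of_int (snd p)\<bar>) powr - (3 / 2)))
            summable_on (UNIV - {(0, 0)})"
      using summable_on_int_pair_powr[of "3 / 2"]
      by (intro summable_on_subset[OF summable_on_cmult_right]) auto
  qed (use inverse_cube_norm_lattice_pt_le[OF K] in \<open>auto simp: c_def\<close>)
  moreover have "range (lattice_pt K K') - {0} = lattice_pt K K' ` (UNIV - {(0, 0)})"
    using lattice_pt_eq_0_iff[OF K] by auto
  moreover have "inj_on (lattice_pt K K') (UNIV - {(0, 0)})"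
    using lattice_pt_eq_iff[OF K] by (auto intro: inj_onI)
  ultimately show "(\<lambda>w. 1 / cmod w ^ 3) summable_on (range (lattice_pt K K') - {0})"
    by (simp add: summable_on_reindex o_def)
qed

lemma abs_int_mult_le_dist:
  fixes x K :: real and a :: int
  assumes "0 \<le> K" "a = 0 \<or> 0 \<le> x \<and> x \<le> K"
  shows "\<bar>of_int a\<bar> * K \<le> \<bar>x - 2 * of_int a * K\<bar>"
proof (cases "a = 0")
  case False
  then consider "1 \<le> real_of_int a" | "real_of_int a \<le> -1"
    by linarith
  then show ?thesis
  proof cases
    case 1
    then have "of_int a * K \<le> (2 * of_int a - 1) * K"
      using assms(1) by (intro mult_right_mono) auto
    then show ?thesis
      using 1 assms False by (simp add: algebra_simps)
  next
    case 2
    then have "- of_int a * K \<le> - 2 * of_int a * K"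
      using assms(1) by (intro mult_right_mono) auto
    then show ?thesis
      using 2 assms False by (simp add: algebra_simps)
  qed
qed simp

lemma norm_lattice_pt_le_dist:
  assumes "0 \<le> K" "0 \<le> K'"
    and "fst p = 0 \<or> 0 \<le> Re z \<and> Re z \<le> K" "snd p = 0 \<or> 0 \<le> Im z \<and> Im z \<le> K'"
  shows "cmod (lattice_pt K K' p) \<le> 2 * cmod (z - lattice_pt K K' p)"
proof (rule power2_le_imp_le)
  have "\<bar>of_int (fst p)\<bar> * K \<le> \<bar>Re (z - lattice_pt K K' p)\<bar>"
    "\<bar>of_int (snd p)\<bar> * K' \<le> \<bar>Im (z - lattice_pt K K' p)\<bar>"
    using abs_int_mult_le_dist[OF assms(1,3)] abs_int_mult_le_dist[OF assms(2,4)] by simp_all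
  then have "(of_int (fst p) * K)\<^sup>2 \<le> (Re (z - lattice_pt K K' p))\<^sup>2"
    "(of_int (snd p) * K')\<^sup>2 \<le> (Im (z - lattice_pt K K' p))\<^sup>2"
    using assms(1,2) by (simp_all add: abs_mult flip: abs_le_square_iff)
  then show "cmod (lattice_pt K K' p) ^ 2 \<le> (2 * cmod (z - lattice_pt K K' p))\<^sup>2"
    by (simp add: norm_lattice_pt_sq cmod_power2[of "z - _"] power_mult_distrib)
qed simp

lemma summable_inverse_square_line:
  assumes "0 < K"
  shows "(\<lambda>w. 1 / cmod w ^ 2) summable_on (range (\<lambda>a. lattice_pt K K (a, 0)) - {0})"
proof -
  have "(\<lambda>a. 1 / cmod (lattice_pt K K (a, 0)) ^ 2) summable_on (UNIV - {0})"
  proof (rule summable_on_comparison_test)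
    show "(\<lambda>a. 1 / K\<^sup>2 * (1 + \<bar>real_of_int a\<bar>) powr - 2) summable_on (UNIV - {0})"
      using summable_on_int_powr[of 2] by (intro summable_on_subset[OF summable_on_cmult_right]) auto
    fix a :: int assume "a \<in> UNIV - {0}"
    then have "(1 + \<bar>real_of_int a\<bar>)\<^sup>2 \<le> (2 * \<bar>real_of_int a\<bar>)\<^sup>2"
      by (intro power_mono) auto
    then have "1 / (2 * \<bar>real_of_int a\<bar>)\<^sup>2 \<le> 1 / (1 + \<bar>real_of_int a\<bar>)\<^sup>2"
      by (intro divide_left_mono) (auto intro!: mult_pos_pos)
    then have "1 / K\<^sup>2 * (1 / (2 * \<bar>real_of_int a\<bar>)\<^sup>2) \<le> 1 / K\<^sup>2 * (1 + \<bar>real_of_int a\<bar>) powr - 2"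
      by (intro mult_left_mono) (simp_all add: powr_minus_divide)
    moreover have "1 / cmod (lattice_pt K K (a, 0)) ^ 2 = 1 / K\<^sup>2 * (1 / (2 * \<bar>real_of_int a\<bar>)\<^sup>2)"
      by (simp add: norm_lattice_pt_sq power_mult_distrib)
    ultimately show "1 / cmod (lattice_pt K K (a, 0)) ^ 2 \<le> 1 / K\<^sup>2 * (1 + \<bar>real_of_int a\<bar>) powr - 2"
      by simp
  qed simp
  moreover have "range (\<lambda>a. lattice_pt K K (a, 0)) - {0} = (\<lambda>a. lattice_pt K K (a, 0)) ` (UNIV - {0})"
    using lattice_pt_eq_0_iff[OF assms assms] by auto
  moreover have "inj_on (\<lambda>a. lattice_pt K K (a, 0)) (UNIV - {0})"
    using lattice_pt_eq_iff[OF assms assms] by (auto intro: inj_onI)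
  ultimately show ?thesis
    by (simp add: summable_on_reindex o_def)
qed

lemma pi_half_le_ellK:
  assumes "0 \<le> m" "m < 1"
  shows "pi / 2 \<le> ellK m"
proof -
  have pos: "0 < 1 - m * (sin t)\<^sup>2" for t
    using assms mult_left_le[of "(sin t)\<^sup>2" m] by (simp add: abs_square_le_1)
  have "1 \<le> 1 / sqrt (1 - m * (sin t)\<^sup>2)" for t
    using pos[of t] assms(1) by (simp add: le_divide_eq)
  moreover have "continuous_on {0..pi / 2} (\<lambda>t. 1 / sqrt (1 - m * (sin t)\<^sup>2))"
    using pos by (intro continuous_intros) (auto simp: less_imp_neq[symmetric])
  ultimately have "integral {0..pi / 2} (\<lambda>t. 1) \<le> integral {0..pi / 2} (\<lambda>t. 1 / sqrt (1 - m * (sin t)\<^sup>2))"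
    by (intro integral_le integrable_continuous_interval) auto
  then show ?thesis
    by (simp add: ellK_def)
qed

lemma ellK_pos: "0 \<le> m \<Longrightarrow> m < 1 \<Longrightarrow> 0 < ellK m"
  using pi_half_le_ellK[of m] pi_gt_zero by linarith

lemma ell_lattice_eq_range: "m \<noteq> 0 \<Longrightarrow> ell_lattice m = range (lattice_pt (ellK m) (ellK (1 - m)))"
  unfolding ell_lattice_def lattice_pt_def by (auto simp: image_iff) (metis fst_conv snd_conv)

lemma ell_lattice_0_eq: "ell_lattice 0 = range (\<lambda>a. lattice_pt (ellK 0) (ellK 0) (a, 0))"
  unfolding ell_lattice_def lattice_pt_def by auto

lemma a_branch_in_strip:
  assumes "z \<in> a_branch m" "0 \<le> ellK m"
  shows "0 \<le> Re z" "Re z \<le> ellK m" "0 \<le> Im z" "m \<noteq> 0 \<Longrightarrow> 0 \<le> ellK (1 - m) \<Longrightarrow> Im z \<le> ellK (1 - m)"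
  using assms unfolding a_branch_def im_range_def by auto

lemma axis_mem_a_branch:
  assumes "u = 1 \<or> u = \<i>" "0 < t" "t \<le> ellK m" "m \<noteq> 0 \<Longrightarrow> t \<le> ellK (1 - m)"
  shows "u * complex_of_real t \<in> a_branch m"
  using assms unfolding a_branch_def im_range_def by auto

lemma a_branch_near_zero_on_axis:
  assumes "z \<in> a_branch m" "cmod z < ellK m"
  shows "\<exists>u t. (u = 1 \<or> u = \<i>) \<and> 0 < t \<and> z = u * complex_of_real t"
proof -
  have "Re z \<noteq> ellK m"
    using assms(2) abs_Re_le_cmod[of z] by auto
  then show ?thesis
    using assms(1) unfolding a_branch_def by force
qed

text \<open>For m = 0 the branch is unbounded, but the lattice is one-dimensional, so the sum of 1/|w|^2
  converges and still bounds wp_reg on the branch.\<close>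

lemma weierstrass_branch_ell_lattice_0:
  "weierstrass_branch (ell_lattice 0 - {0}) (ellK 0) (a_branch 0) (ellK 0)"
proof -
  define K where "K = ellK 0"
  have K: "0 < K"
    using ellK_pos[of 0] by (simp add: K_def)
  have L: "ell_lattice 0 - {0} = range (\<lambda>a. lattice_pt K K (a, 0)) - {0}"
    by (simp add: ell_lattice_0_eq K_def)
  have lattice: "weierstrass_lattice (ell_lattice 0 - {0}) K"
  proof (rule weierstrass_lattice_subset[OF weierstrass_lattice_rect[OF K K, simplified]])
    fix w assume "w \<in> ell_lattice 0 - {0}"
    then obtain a where "w = lattice_pt K K (a, 0)" "w \<noteq> 0"
      unfolding L by auto
    then show "- w \<in> ell_lattice 0 - {0}" "cnj w \<in> ell_lattice 0 - {0}"
      unfolding L by (auto simp: lattice_pt_def image_iff intro!: exI[of _ "- a"])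
  qed (auto simp: L)
  interpret weierstrass_lattice "ell_lattice 0 - {0}" K
    by (fact lattice)
  have "cmod (wp_reg z) \<le> 5 * (\<Sum>\<^sub>\<infinity>w\<in>ell_lattice 0 - {0}. 1 / cmod w ^ 2)" if "z \<in> a_branch 0" for z
  proof (rule norm_wp_reg_le_if_square_summable)
    show "(\<lambda>w. 1 / cmod w ^ 2) summable_on ell_lattice 0 - {0}"
      unfolding L by (rule summable_inverse_square_line[OF K])
    fix w assume "w \<in> ell_lattice 0 - {0}"
    then obtain a where "w = lattice_pt K K (a, 0)"
      unfolding L by auto
    then show "cmod w \<le> 2 * cmod (z - w)"
      using a_branch_in_strip[OF that] K by (simp add: K_def norm_lattice_pt_le_dist)
  qed
  then have "bounded (wp_reg ` a_branch 0)"
    by (auto simp: bounded_iff)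
  then show ?thesis
    unfolding K_def[symmetric] using K a_branch_near_zero_on_axis axis_mem_a_branch
    by (intro weierstrass_branch.intro[OF lattice] weierstrass_branch_axioms.intro) (auto simp: K_def)
qed

lemma weierstrass_branch_ell_lattice:
  assumes "0 < m" "m < 1"
  defines "\<mu> \<equiv> min (ellK m) (ellK (1 - m))"
  shows "weierstrass_branch (ell_lattice m - {0}) \<mu> (a_branch m) \<mu>"
proof -
  define K K' where "K = ellK m" and "K' = ellK (1 - m)"
  have K: "0 < K" "0 < K'"
    using ellK_pos assms by (auto simp: K_def K'_def)
  have L: "ell_lattice m - {0} = range (lattice_pt K K') - {0}"
    using assms(1) by (simp add: ell_lattice_eq_range K_def K'_def)
  interpret weierstrass_lattice "ell_lattice m - {0}" \<mu>
    unfolding L \<mu>_def K_def[symmetric] K'_def[symmetric] by (rule weierstrass_lattice_rect[OF K])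
  have "cmod (wp_reg z) \<le> 4 * (K + K') * (2 + (K + K') / \<mu>) * inverse_cube_sum" if "z \<in> a_branch m" for z
  proof (rule norm_wp_reg_le_if_bounded)
    note strip = a_branch_in_strip[OF that, folded K_def K'_def]
    show "cmod z \<le> K + K'"
      using cmod_le[of z] strip K assms(1) by simp
    fix w assume "w \<in> ell_lattice m - {0}"
    then obtain p where "w = lattice_pt K K' p"
      unfolding L by auto
    then show "cmod w \<le> 2 * cmod (z - w)"
      using strip K assms(1) by (simp add: norm_lattice_pt_le_dist)
  qed
  then have "bounded (wp_reg ` a_branch m)"
    by (auto simp: bounded_iff)
  then show ?thesis
    using K assms(1) a_branch_near_zero_on_axis axis_mem_a_branch
    by (intro weierstrass_branch.intro weierstrass_lattice_axioms weierstrass_branch_axioms.intro)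
      (auto simp: \<mu>_def K_def K'_def)
qed

theorem wzeta_branch_asymptotics:
  assumes "0 \<le> m" "m < 1"
  defines "K \<equiv> complex_of_real (ellK m)"
  shows "\<exists>C R. R > 0 \<and> (\<forall>V::real. R \<le> \<bar>V\<bar> \<longrightarrow>
           cmod ((K * wzeta m (THE a. a \<in> a_branch m \<and> wp m a = complex_of_real V)
                   - wzeta m K * (THE a. a \<in> a_branch m \<and> wp m a = complex_of_real V))\<^sup>2
                 - (K\<^sup>2 * complex_of_real V - 2 * K * wzeta m K)) \<le> C / \<bar>V\<bar>)"
proof -
  obtain \<rho> r0 where "weierstrass_branch (ell_lattice m - {0}) \<rho> (a_branch m) r0"
  proof (cases "m = 0")
    case True
    then show ?thesis
      using that weierstrass_branch_ell_lattice_0 by blast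
  next
    case False
    then show ?thesis
      using that weierstrass_branch_ell_lattice[of m] assms(1,2) by simp
  qed
  then interpret weierstrass_branch "ell_lattice m - {0}" \<rho> "a_branch m" r0 .
  have "wp m = wp_lat" "wzeta m = zeta_lat"
    by (simp_all add: fun_eq_iff wp_def wzeta_def wp_lat_def zeta_lat_def wp_reg_def zeta_reg_def
        wp_summand_def zeta_summand_def)
  then show ?thesis
    using zeta_branch_asymptotics by simp
qed

lemma kconst_rescaled:
  assumes "c \<noteq> 0"
  shows "complex_of_real (6 * pi\<^sup>2) * kconst c m V / complex_of_real c
           = (complex_of_real (ellK m) * wzeta m (THE a. a \<in> a_branch m \<and> wp m a = complex_of_real V)
              - wzeta m (complex_of_real (ellK m)) * (THE a. a \<in> a_branch m \<and> wp m a = complex_of_real V))\<^sup>2"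
proof -
  have "6 * pi\<^sup>2 * (c / (6 * pi\<^sup>2)) = c"
    by simp
  then have "complex_of_real (6 * pi\<^sup>2) * complex_of_real (c / (6 * pi\<^sup>2)) = complex_of_real c"
    by (metis of_real_mult)
  then show ?thesis
    using assms by (simp add: kconst_def Let_def mult.assoc[symmetric])
qed

theorem mainTheorem3:
  fixes c m :: real
  assumes "c \<noteq> 0" and "0 \<le> m" and "m < 1"
  shows "\<exists>C R. R > 0 \<and> (\<forall>V::real. R \<le> \<bar>V\<bar> \<longrightarrow>
           cmod (complex_of_real (6 * pi\<^sup>2) * kconst c m V / complex_of_real c
                 - (complex_of_real ((ellK m)\<^sup>2 * V)
                    - 2 * complex_of_real (ellK m) * wzeta m (complex_of_real (ellK m))))
           \<le> C / \<bar>V\<bar>)"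
proof -
  have "complex_of_real ((ellK m)\<^sup>2 * V) = (complex_of_real (ellK m))\<^sup>2 * complex_of_real V" for V
    by simp
  then show ?thesis
    using wzeta_branch_asymptotics[OF assms(2,3)] by (simp only: kconst_rescaled[OF assms(1)])
qed

end
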